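(* Let $G$ be any graph without isolated vertices. If $f=(V_0,V_1,V_2)$ is a $\gamma_{qtR}(G)$-function and $V_{1,2}^*=\{v\in V_1: N(v)\cap V_2\neq\emptyset\}$, then $$\gamma(G)+|V_2|+|V_{1,2}^*|\le \gamma_{qtR}(G)\le 3\gamma(G).$$
   Context: All graphs are finite, simple and undirected; $N(v)$ is the open neighborhood of $v$ and $\gamma(G)$ the domination number. For $f:V(G)\to\{0,1,2\}$ write $V_i=\{v:f(v)=i\}$ and $f=(V_0,V_1,V_2)$; weight $\omega(f)=|V_1|+2|V_2|$. A quasi-total Roman dominating function (QTRDF) is an $f$ such that every vertex labeled $0$ is adjacent to a vertex labeled $2$, and every vertex isolated in the subgraph induced by $V_1\cup V_2$ has label $1$; $\gamma_{qtR}(G)$ is the minimum weight of a QTRDF, and a $\gamma_{qtR}(G)$-function is a QTRDF of weight $\gamma_{qtR}(G)$. *)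

theory Defs
  imports Main
begin

definition simple_graph :: "'a set \<Rightarrow> ('a \<Rightarrow> 'a \<Rightarrow> bool) \<Rightarrow> bool" where
  "simple_graph V E \<longleftrightarrow> finite V \<and> (\<forall>u v. E u v \<longrightarrow> u \<in> V \<and> v \<in> V)
     \<and> (\<forall>u v. E u v \<longrightarrow> E v u) \<and> (\<forall>v. \<not> E v v)"

definition nbhd :: "'a set \<Rightarrow> ('a \<Rightarrow> 'a \<Rightarrow> bool) \<Rightarrow> 'a \<Rightarrow> 'a set" where
  "nbhd V E v = {u \<in> V. E v u}"

definition no_isolated :: "'a set \<Rightarrow> ('a \<Rightarrow> 'a \<Rightarrow> bool) \<Rightarrow> bool" where
  "no_isolated V E \<longleftrightarrow> (\<forall>v\<in>V. nbhd V E v \<noteq> {})"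

definition dominating_set :: "'a set \<Rightarrow> ('a \<Rightarrow> 'a \<Rightarrow> bool) \<Rightarrow> 'a set \<Rightarrow> bool" where
  "dominating_set V E D \<longleftrightarrow> D \<subseteq> V \<and> (\<forall>v\<in>V - D. nbhd V E v \<inter> D \<noteq> {})"

definition domination_number :: "'a set \<Rightarrow> ('a \<Rightarrow> 'a \<Rightarrow> bool) \<Rightarrow> nat" where
  "domination_number V E = Min (card ` {D. dominating_set V E D})"

text \<open>Labellings f : V -> {0,1,2}; values outside V are irrelevant and fixed to 0.\<close>
definition qtrdf :: "'a set \<Rightarrow> ('a \<Rightarrow> 'a \<Rightarrow> bool) \<Rightarrow> ('a \<Rightarrow> nat) \<Rightarrow> bool" where
  "qtrdf V E f \<longleftrightarrow>
     (\<forall>v. v \<notin> V \<longrightarrow> f v = 0) \<and>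
     (\<forall>v\<in>V. f v \<le> 2) \<and>
     (\<forall>v\<in>V. f v = 0 \<longrightarrow> (\<exists>u\<in>nbhd V E v. f u = 2)) \<and>
     (\<forall>v\<in>V. f v \<noteq> 0 \<and> (\<forall>u\<in>nbhd V E v. f u = 0) \<longrightarrow> f v = 1)"

definition weight :: "'a set \<Rightarrow> ('a \<Rightarrow> nat) \<Rightarrow> nat" where
  "weight V f = (\<Sum>v\<in>V. f v)"

definition qtR_number :: "'a set \<Rightarrow> ('a \<Rightarrow> 'a \<Rightarrow> bool) \<Rightarrow> nat" where
  "qtR_number V E = Min (weight V ` {f. qtrdf V E f})"

definition qtR_function :: "'a set \<Rightarrow> ('a \<Rightarrow> 'a \<Rightarrow> bool) \<Rightarrow> ('a \<Rightarrow> nat) \<Rightarrow> bool" where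
  "qtR_function V E f \<longleftrightarrow> qtrdf V E f \<and> weight V f = qtR_number V E"

end

theory Submission
  imports Defs
begin

text \<open>Lower bound: the vertices labelled 2, together with the vertices labelled 1 that have
  no neighbour labelled 2, dominate the graph; this set has size \<open>|V\<^sub>2| + |V\<^sub>1| - |V\<^sup>*\<^sub>1\<^sub>2|\<close>,
  while the weight is \<open>|V\<^sub>1| + 2|V\<^sub>2|\<close>. Upper bound: for a minimum dominating set \<open>D\<close>,
  label \<open>D\<close> with 2 and one chosen neighbour of each vertex of \<open>D\<close> (if outside \<open>D\<close>) with 1;
  this is a quasi-total Roman dominating function of weight at most \<open>3|D|\<close>.\<close>

lemma weight_eq_card_labels:
  assumes "finite V" and "\<forall>v\<in>V. f v \<le> 2"
  shows "weight V f = card {v\<in>V. f v = 1} + 2 * card {v\<in>V. f v = 2}"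
proof -
  have "weight V f = (\<Sum>v\<in>V. (if f v = 1 then 1 else 0) + (if f v = 2 then 2 else 0))"
    unfolding weight_def using assms(2) by (intro sum.cong) auto
  also have "\<dots> = card {v\<in>V. f v = 1} + 2 * card {v\<in>V. f v = 2}"
    unfolding sum.distrib
    using sum.inter_filter[OF assms(1), of "\<lambda>_. 1::nat" "\<lambda>v. f v = 1", symmetric]
          sum.inter_filter[OF assms(1), of "\<lambda>_. 2::nat" "\<lambda>v. f v = 2", symmetric]
    by simp
  finally show ?thesis .
qed

lemma qtR_number_le:
  assumes "finite V" and "qtrdf V E g"
  shows "qtR_number V E \<le> weight V g"
proof -
  have "weight V ` {f. qtrdf V E f} \<subseteq> {0..2 * card V}"
  proof
    fix x assume "x \<in> weight V ` {f. qtrdf V E f}"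
    then obtain h where h: "qtrdf V E h" "x = weight V h" by auto
    have "weight V h \<le> (\<Sum>v\<in>V. 2)" unfolding weight_def
      using h(1) by (intro sum_mono) (auto simp: qtrdf_def)
    then show "x \<in> {0..2 * card V}" using h by simp
  qed
  then have "finite (weight V ` {f. qtrdf V E f})" using finite_subset by blast
  then show ?thesis unfolding qtR_number_def using assms(2) by (intro Min_le) auto
qed

lemma finite_dominating_set_cards:
  assumes "finite V"
  shows "finite (card ` {D. dominating_set V E D})"
proof -
  have "card ` {D. dominating_set V E D} \<subseteq> {0..card V}"
    using assms by (auto simp: dominating_set_def intro: card_mono)
  then show ?thesis using finite_subset by blast
qed

lemma domination_number_le:
  assumes "finite V" and "dominating_set V E D"
  shows "domination_number V E \<le> card D"
  unfolding domination_number_def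
  using assms finite_dominating_set_cards[OF assms(1)] by (intro Min_le) auto

lemma domination_number_attained:
  assumes "finite V"
  obtains D where "dominating_set V E D" and "card D = domination_number V E"
proof -
  have "dominating_set V E V" by (auto simp: dominating_set_def)
  then have "domination_number V E \<in> card ` {D. dominating_set V E D}"
    unfolding domination_number_def
    using finite_dominating_set_cards[OF assms] by (intro Min_in) auto
  then show ?thesis using that by auto
qed

lemma dominating_set_of_qtrdf:
  assumes "qtrdf V E f"
  shows "dominating_set V E
           ({v\<in>V. f v = 2} \<union> {v\<in>V. f v = 1 \<and> \<not> (\<exists>u\<in>nbhd V E v. f u = 2)})"
    (is "dominating_set V E ?D")
  unfolding dominating_set_def
proof (intro conjI ballI)
  show "?D \<subseteq> V" by auto
next
  fix v assume v: "v \<in> V - ?D"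
  have "\<exists>u\<in>nbhd V E v. f u = 2"
  proof (cases "f v = 0")
    case True
    then show ?thesis using assms v by (auto simp: qtrdf_def)
  next
    case False
    then have "f v = 1 \<or> f v = 2" using assms v by (auto simp: qtrdf_def)
    then show ?thesis using v by auto
  qed
  then show "nbhd V E v \<inter> ?D \<noteq> {}" by (auto simp: nbhd_def)
qed

lemma domination_number_plus_labels_le_weight:
  assumes "finite V" and "qtrdf V E f"
  shows "domination_number V E + card {v\<in>V. f v = 2}
           + card {v\<in>V. f v = 1 \<and> (\<exists>u\<in>nbhd V E v. f u = 2)} \<le> weight V f"
proof -
  define V2 where "V2 = {v\<in>V. f v = 2}"
  define S where "S = {v\<in>V. f v = 1 \<and> (\<exists>u\<in>nbhd V E v. f u = 2)}"
  define T where "T = {v\<in>V. f v = 1 \<and> \<not> (\<exists>u\<in>nbhd V E v. f u = 2)}"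
  have fin: "finite V2" "finite S" "finite T"
    using assms(1) unfolding V2_def S_def T_def by auto
  have "{v\<in>V. f v = 1} = S \<union> T" unfolding S_def T_def by auto
  then have V1: "card {v\<in>V. f v = 1} = card S + card T"
    using fin by (simp add: card_Un_disjoint S_def T_def disjoint_iff)
  have "domination_number V E \<le> card (V2 \<union> T)"
    using domination_number_le[OF assms(1) dominating_set_of_qtrdf[OF assms(2)]]
    unfolding V2_def T_def .
  also have "\<dots> = card V2 + card T"
    using fin by (intro card_Un_disjoint) (auto simp: V2_def T_def)
  finally have "domination_number V E \<le> card V2 + card T" .
  moreover have "weight V f = card S + card T + 2 * card V2"
    using weight_eq_card_labels[OF assms(1)] assms(2) V1
    unfolding V2_def by (simp add: qtrdf_def)
  ultimately show ?thesis unfolding V2_def[symmetric] S_def[symmetric] by linarith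
qed

lemma qtrdf_of_dominating_set:
  assumes "finite V" and "no_isolated V E" and "dominating_set V E D"
  obtains g where "qtrdf V E g" and "weight V g \<le> 3 * card D"
proof -
  have DV: "D \<subseteq> V" using assms(3) by (simp add: dominating_set_def)
  define nb where "nb v = (SOME u. u \<in> nbhd V E v)" for v
  have nb: "nb v \<in> nbhd V E v" if "v \<in> V" for v
    using assms(2) that unfolding nb_def no_isolated_def by (metis some_in_eq)
  have nbV: "nb ` D \<subseteq> V" using nb DV by (auto simp: nbhd_def)
  define g where "g v = (if v \<in> D then 2 else if v \<in> nb ` D then 1 else (0::nat))" for v
  have "qtrdf V E g"
    unfolding qtrdf_def
  proof (intro conjI ballI allI impI)
    fix v assume "v \<notin> V"
    then show "g v = 0" using DV nbV unfolding g_def by auto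
  next
    fix v assume "v \<in> V"
    then show "g v \<le> 2" unfolding g_def by auto
  next
    fix v assume "v \<in> V" "g v = 0"
    then have "v \<in> V - D" unfolding g_def by (auto split: if_splits)
    then obtain u where "u \<in> nbhd V E v" "u \<in> D"
      using assms(3) unfolding dominating_set_def by blast
    then show "\<exists>u\<in>nbhd V E v. g u = 2" unfolding g_def by auto
  next
    fix v assume v: "v \<in> V" "g v \<noteq> 0 \<and> (\<forall>u\<in>nbhd V E v. g u = 0)"
    show "g v = 1"
    proof (cases "v \<in> D")
      case True
      then have "g (nb v) \<noteq> 0" unfolding g_def by auto
      then show ?thesis using v nb[OF v(1)] by auto
    next
      case False
      then show ?thesis using v unfolding g_def by (auto split: if_splits)
    qed
  qed
  moreover have "weight V g \<le> 3 * card D"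
  proof -
    have "{v\<in>V. g v = 2} = D" "{v\<in>V. g v = 1} = nb ` D - D"
      using DV nbV unfolding g_def by auto
    then have "weight V g = card (nb ` D - D) + 2 * card D"
      using weight_eq_card_labels[OF assms(1), of g] by (simp add: g_def)
    moreover have "card (nb ` D - D) \<le> card D"
    proof -
      have "finite D" using DV assms(1) by (rule finite_subset)
      then have "card (nb ` D - D) \<le> card (nb ` D)" by (intro card_mono) auto
      also have "\<dots> \<le> card D" using \<open>finite D\<close> by (rule card_image_le)
      finally show ?thesis .
    qed
    ultimately show ?thesis by linarith
  qed
  ultimately show ?thesis using that by blast
qed

lemma qtR_number_le_three_domination_number:
  assumes "finite V" and "no_isolated V E"
  shows "qtR_number V E \<le> 3 * domination_number V E"
proof -
  obtain D where D: "dominating_set V E D" "card D = domination_number V E"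
    using domination_number_attained[OF assms(1)] .
  obtain g where "qtrdf V E g" "weight V g \<le> 3 * card D"
    using qtrdf_of_dominating_set[OF assms D(1)] .
  then show ?thesis using qtR_number_le[OF assms(1)] D(2) by fastforce
qed

theorem mainTheorem3:
  fixes V :: "'a set" and E :: "'a \<Rightarrow> 'a \<Rightarrow> bool" and f :: "'a \<Rightarrow> nat"
  assumes "simple_graph V E"
    and "no_isolated V E"
    and "qtR_function V E f"
  shows "domination_number V E + card {v\<in>V. f v = 2}
           + card {v\<in>V. f v = 1 \<and> (\<exists>u\<in>nbhd V E v. f u = 2)} \<le> qtR_number V E
         \<and> qtR_number V E \<le> 3 * domination_number V E"
proof
  have fin: "finite V" using assms(1) by (simp add: simple_graph_def)
  show "domination_number V E + card {v\<in>V. f v = 2}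
           + card {v\<in>V. f v = 1 \<and> (\<exists>u\<in>nbhd V E v. f u = 2)} \<le> qtR_number V E"
    using domination_number_plus_labels_le_weight[OF fin, of E f] assms(3)
    unfolding qtR_function_def by simp
  show "qtR_number V E \<le> 3 * domination_number V E"
    using qtR_number_le_three_domination_number[OF fin assms(2)] .
qed

end
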